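(* Let $\Omega\subset\mathbb{R}^n$, $n\ge2$, be a bounded $C^{2,\alpha}$ domain with $0\in\partial\Omega$. Let $a_1(s,p),a_2(s,p)$ be defined on $\mathcal R\times B_{r_0}(0)$ and satisfy (H1)--(H3) below, with $r_0$ small enough that, for all $s\in\mathbb{R}$ and $p\in\mathbb{C}^n$ with $p\cdot p=0$, $|p|<r_0$, and every $h\in C^{2,\alpha}(\overline\Omega)$, the linear problem $$\operatorname{div}_x\Big[a(u_{s,p},p)\nabla v+p\big\{\nabla_pa(u_{s,p},p)\cdot\nabla v+\partial_sa(u_{s,p},p)v\big\}\Big]=0\ \text{in }\Omega,\qquad v|_{\partial\Omega}=h$$ (for $a=a_1,a_2$) has a unique solution $v\in C^{2,\alpha}(\overline\Omega)$. Assume the corresponding linearized DN maps coincide: $\widetilde\Gamma_{\ell,a_1,s,p}[h]=\widetilde\Gamma_{\ell,a_2,s,p}[h]$ in $C^{1,\alpha}(\partial\Omega)$ for all $h\in C^{2,\alpha}(\overline\Omega)$ and all such $(s,p)$. Then $a_1\equiv a_2$ in $\mathcal R\times\mathcal C(r_0)$.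
   Context: $u_{s,p}(x)=s+x\cdot p$, $x\cdot p=\sum_jx_jp_j$. $\mathcal R=\mathbb{R}+i[-R_0,R_0]$, $B_r(0)=\{p\in\mathbb{C}^n:|p|<r\}$, $\nu$ outer unit normal, and $\mathcal C(r_0)=\{p\in\mathbb{C}^n:|p|<r_0,\ p\cdot p=0,\ p\cdot\nu(0)\ne0\}$. (H1) $a=a(s,p)>0$ for real $(s,p)$. (H2) there are $r_0,R_0>0$ such that $a$ extends analytically to $\mathcal R\times B_{r_0}(0)$, real for real arguments. (H3) there exist $\tilde\lambda>0$, $\Lambda$, continuous $\lambda(s,p)$ with $0<\tilde\lambda\le\lambda(s,p)\le\operatorname{Re}a(s,p)$ and $|a|+|\nabla_pa|\le\Lambda$ on $\mathcal R\times B_{r_0}(0)$. Linearized DN map: $\widetilde\Gamma_{\ell,a,s,p}[h]=\big[a(u_{s,p},p)\nabla v+p\{\nabla_pa(u_{s,p},p)\cdot\nabla v+\partial_sa(u_{s,p},p)v\}\big]\cdot\nu|_{\partial\Omega}$ with $v$ the solution of the linear problem above. *)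

theory Defs
  imports "HOL-Analysis.Analysis"
begin

definition pd :: "((real^'n) \<Rightarrow> 'b::real_normed_vector) \<Rightarrow> 'n \<Rightarrow> real^'n \<Rightarrow> 'b" where
  "pd f j x = vector_derivative (\<lambda>t::real. f (x + t *\<^sub>R axis j 1)) (at 0)"

definition has_pd :: "((real^'n) \<Rightarrow> 'b::real_normed_vector) \<Rightarrow> 'n \<Rightarrow> real^'n \<Rightarrow> bool" where
  "has_pd f j x \<longleftrightarrow> (\<lambda>t::real. f (x + t *\<^sub>R axis j 1)) differentiable (at 0)"

definition holder_on :: "real \<Rightarrow> (real^'n) set \<Rightarrow> ((real^'n) \<Rightarrow> 'b::real_normed_vector) \<Rightarrow> bool" where
  "holder_on \<alpha> S g \<longleftrightarrow> (\<exists>C. \<forall>x\<in>S. \<forall>y\<in>S. norm (g x - g y) \<le> C * dist x y powr \<alpha>)"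

text \<open>Membership in C^{2,alpha}(closure S): continuous on the closure, C^2 in S,
  first derivatives extend continuously to the closure (uniform continuity on S),
  second derivatives uniformly alpha-Hoelder on S.\<close>
definition C2a :: "(real^'n) set \<Rightarrow> real \<Rightarrow> ((real^'n) \<Rightarrow> 'b::real_normed_vector) \<Rightarrow> bool" where
  "C2a S \<alpha> v \<longleftrightarrow>
     continuous_on (closure S) v \<and>
     (\<forall>x\<in>S. \<forall>j. has_pd v j x) \<and>
     (\<forall>x\<in>S. \<forall>i j. has_pd (pd v j) i x) \<and>
     (\<forall>j. uniformly_continuous_on S (pd v j)) \<and>
     (\<forall>i j. holder_on \<alpha> S (pd (pd v j) i))"

definition grad_r :: "((real^'n) \<Rightarrow> real) \<Rightarrow> real^'n \<Rightarrow> real^'n" where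
  "grad_r \<rho> x = (\<chi> j. pd \<rho> j x)"

definition local_defn :: "(real^'n) set \<Rightarrow> real \<Rightarrow> real^'n \<Rightarrow> real \<Rightarrow> ((real^'n) \<Rightarrow> real) \<Rightarrow> bool" where
  "local_defn \<Omega> \<alpha> x0 r \<rho> \<longleftrightarrow> 0 < r \<and> C2a (ball x0 r) \<alpha> \<rho> \<and>
     (\<forall>x\<in>ball x0 r. grad_r \<rho> x \<noteq> 0) \<and>
     \<Omega> \<inter> ball x0 r = {x \<in> ball x0 r. \<rho> x < 0}"

definition C2a_domain :: "(real^'n) set \<Rightarrow> real \<Rightarrow> bool" where
  "C2a_domain \<Omega> \<alpha> \<longleftrightarrow> open \<Omega> \<and> connected \<Omega> \<and> bounded \<Omega> \<and> \<Omega> \<noteq> {} \<and>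
     (\<forall>x0\<in>frontier \<Omega>. \<exists>r \<rho>. local_defn \<Omega> \<alpha> x0 r \<rho>)"

definition outer_normal :: "(real^'n) set \<Rightarrow> real \<Rightarrow> real^'n \<Rightarrow> real^'n" where
  "outer_normal \<Omega> \<alpha> x = (SOME \<nu>. \<exists>r \<rho>. local_defn \<Omega> \<alpha> x r \<rho> \<and>
       \<nu> = (1 / norm (grad_r \<rho> x)) *\<^sub>R grad_r \<rho> x)"

definition cscale :: "complex \<Rightarrow> complex \<times> (complex^'n) \<Rightarrow> complex \<times> (complex^'n)" where
  "cscale c z = (c * fst z, c *s snd z)"

text \<open>Holomorphic (= complex analytic) on an open set: complex Frechet differentiable.\<close>
definition cholo_on :: "(complex \<times> (complex^'n)) set \<Rightarrow> (complex \<times> (complex^'n) \<Rightarrow> complex) \<Rightarrow> bool" where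
  "cholo_on U f \<longleftrightarrow> open U \<and>
     (\<forall>z\<in>U. \<exists>L. (f has_derivative L) (at z) \<and> (\<forall>c w. L (cscale c w) = c * L w))"

definition strip :: "real \<Rightarrow> complex set" where
  "strip R0 = {z. \<bar>Im z\<bar> \<le> R0}"

definition vreal :: "real^'n \<Rightarrow> complex^'n" where
  "vreal p = (\<chi> j. complex_of_real (p $ j))"

definition bdot :: "complex^'n \<Rightarrow> complex^'n \<Rightarrow> complex" where
  "bdot p q = (\<Sum>j\<in>UNIV. p $ j * q $ j)"

definition ds :: "(complex \<Rightarrow> complex^'n \<Rightarrow> complex) \<Rightarrow> complex \<Rightarrow> complex^'n \<Rightarrow> complex" where
  "ds a s p = deriv (\<lambda>w. a w p) s"

definition gradp :: "(complex \<Rightarrow> complex^'n \<Rightarrow> complex) \<Rightarrow> complex \<Rightarrow> complex^'n \<Rightarrow> complex^'n" where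
  "gradp a s p = (\<chi> j. deriv (\<lambda>w. a s (\<chi> k. if k = j then w else p $ k)) (p $ j))"

definition u_sp :: "complex \<Rightarrow> complex^'n \<Rightarrow> real^'n \<Rightarrow> complex" where
  "u_sp s p x = s + bdot (vreal x) p"

definition gradc :: "((real^'n) \<Rightarrow> complex) \<Rightarrow> real^'n \<Rightarrow> complex^'n" where
  "gradc v x = (\<chi> j. pd v j x)"

text \<open>Flux vector field a(u,p) grad v + p { grad_p a(u,p) . grad v + d_s a(u,p) v },
  with the gradient g of v given separately (interior vs boundary values).\<close>
definition flux :: "(complex \<Rightarrow> complex^'n \<Rightarrow> complex) \<Rightarrow> complex \<Rightarrow> complex^'n \<Rightarrow> real^'n
                    \<Rightarrow> complex \<Rightarrow> complex^'n \<Rightarrow> complex^'n" where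
  "flux a s p x vx g = a (u_sp s p x) p *s g
      + (bdot (gradp a (u_sp s p x) p) g + ds a (u_sp s p x) p * vx) *s p"

definition div_zero :: "(real^'n \<Rightarrow> complex^'n) \<Rightarrow> real^'n \<Rightarrow> bool" where
  "div_zero F x \<longleftrightarrow> (\<forall>j. has_pd (\<lambda>y. F y $ j) j x) \<and> (\<Sum>j\<in>UNIV. pd (\<lambda>y. F y $ j) j x) = 0"

definition solves :: "(real^'n) set \<Rightarrow> real \<Rightarrow> (complex \<Rightarrow> complex^'n \<Rightarrow> complex) \<Rightarrow> complex \<Rightarrow> complex^'n
                      \<Rightarrow> (real^'n \<Rightarrow> complex) \<Rightarrow> (real^'n \<Rightarrow> complex) \<Rightarrow> bool" where
  "solves \<Omega> \<alpha> a s p h v \<longleftrightarrow> C2a \<Omega> \<alpha> v \<and>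
     (\<forall>x\<in>\<Omega>. div_zero (\<lambda>y. flux a s p y (v y) (gradc v y)) x) \<and>
     (\<forall>x\<in>frontier \<Omega>. v x = h x)"

definition gradb :: "(real^'n) set \<Rightarrow> ((real^'n) \<Rightarrow> complex) \<Rightarrow> real^'n \<Rightarrow> complex^'n" where
  "gradb \<Omega> v x = (\<chi> j. Lim (at x within \<Omega>) (pd v j))"

definition lin_DN :: "(real^'n) set \<Rightarrow> real \<Rightarrow> (complex \<Rightarrow> complex^'n \<Rightarrow> complex) \<Rightarrow> complex \<Rightarrow> complex^'n
                      \<Rightarrow> (real^'n \<Rightarrow> complex) \<Rightarrow> real^'n \<Rightarrow> complex" where
  "lin_DN \<Omega> \<alpha> a s p v x = bdot (flux a s p x (v x) (gradb \<Omega> v x)) (vreal (outer_normal \<Omega> \<alpha> x))"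

definition cone :: "(real^'n) set \<Rightarrow> real \<Rightarrow> real \<Rightarrow> (complex^'n) set" where
  "cone \<Omega> \<alpha> r0 = {p. norm p < r0 \<and> bdot p p = 0 \<and> bdot p (vreal (outer_normal \<Omega> \<alpha> 0)) \<noteq> 0}"

definition H123 :: "real \<Rightarrow> real \<Rightarrow> (complex \<Rightarrow> complex^'n \<Rightarrow> complex) \<Rightarrow> bool" where
  "H123 r0 R0 a \<longleftrightarrow>
     \<comment> \<open>(H1) and reality for real arguments\<close>
     (\<forall>(s::real) (p::real^'n). norm p < r0 \<longrightarrow>
         a (complex_of_real s) (vreal p) \<in> \<real> \<and> 0 < Re (a (complex_of_real s) (vreal p))) \<and>
     \<comment> \<open>(H2) analytic on a neighbourhood of R x B_r0(0)\<close>
     (\<exists>U. strip R0 \<times> ball 0 r0 \<subseteq> U \<and> cholo_on U (\<lambda>z. a (fst z) (snd z))) \<and>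
     \<comment> \<open>(H3)\<close>
     (\<exists>lt \<Lambda> (lam :: complex \<Rightarrow> complex^'n \<Rightarrow> real). 0 < lt \<and>
         continuous_on (strip R0 \<times> ball 0 r0) (\<lambda>z. lam (fst z) (snd z)) \<and>
         (\<forall>s\<in>strip R0. \<forall>p\<in>ball 0 r0.
            lt \<le> lam s p \<and> lam s p \<le> Re (a s p) \<and>
            cmod (a s p) + norm (gradp a s p) \<le> \<Lambda>))"

end

theory Submission
  imports Defs "HOL-Complex_Analysis.Complex_Analysis"
begin

(* For a null vector p (p \<cdot> p = 0) the linear function v(x) = x \<cdot> p solves the linearized
   equation with boundary data v itself: its flux is K(u) p for a holomorphic K, so its divergence
   is K'(u) (p \<cdot> p) = 0. At the boundary point 0, where v vanishes, the linearized DN map of v is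
   (a + p \<cdot> \<nabla>\<^sub>p a)(s, p) (p \<cdot> \<nu>(0)). Equal DN maps therefore give equal Euler terms
   a + p \<cdot> \<nabla>\<^sub>p a for all small null p with p \<cdot> \<nu>(0) \<noteq> 0. Along the complex line \<lambda> \<mapsto> \<lambda> p the
   Euler term is d/d\<lambda> (\<lambda> a(s, \<lambda> p)), so \<lambda> a1(s, \<lambda> p) = \<lambda> a2(s, \<lambda> p) near \<lambda> = 0, and analytic
   continuation, first in \<lambda> and then in s from the real axis to the strip, gives a1 = a2.
   That K is holomorphic needs s \<mapsto> p \<cdot> \<nabla>\<^sub>p a(s, p) to be holomorphic, which follows from
   Cauchy's integral formula with a holomorphic parameter. *)

section \<open>Holomorphic dependence on a parameter\<close>

lemma continuous_on_circlepath_integrand: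
  assumes "continuous_on (S \<times> sphere c r) (\<lambda>(x, u). F x u)" "0 \<le> r"
  shows "continuous_on (S \<times> cbox 0 1)
           (\<lambda>(x, t). F x (circlepath c r t) * vector_derivative (circlepath c r) (at t))"
proof -
  have "continuous_on (S \<times> cbox 0 1) ((\<lambda>(x, u). F x u) \<circ> (\<lambda>(x, t). (x, circlepath c r t)))"
  proof (rule continuous_on_compose)
    show "continuous_on (S \<times> cbox 0 1) (\<lambda>(x, t). (x, circlepath c r t))"
      unfolding case_prod_beta circlepath by (intro continuous_intros)
    have "circlepath c r t \<in> sphere c r" if "t \<in> cbox 0 1" for t
      using that assms(2) path_image_circlepath_nonneg[of r c] by (auto simp: path_image_def)
    then show "continuous_on ((\<lambda>(x, t). (x, circlepath c r t)) ` (S \<times> cbox 0 1)) (\<lambda>(x, u). F x u)"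
      by (auto intro: continuous_on_subset[OF assms(1)])
  qed
  then show ?thesis
    unfolding vector_derivative_circlepath case_prod_beta o_def
    by (intro continuous_intros) simp
qed

lemma continuous_on_contour_integral_circlepath:
  assumes "continuous_on (S \<times> sphere c r) (\<lambda>(x, u). F x u)" "0 \<le> r"
  shows "continuous_on S (\<lambda>x. contour_integral (circlepath c r) (F x))"
  unfolding contour_integral_integral cbox_interval[symmetric]
  by (rule integral_continuous_on_param[OF continuous_on_circlepath_integrand[OF assms]])

lemma holomorphic_on_contour_integral_circlepath:
  assumes "convex S" "0 \<le> r"
    and deriv: "\<And>x u. x \<in> S \<Longrightarrow> u \<in> sphere c r \<Longrightarrow>
                  ((\<lambda>x. F x u) has_field_derivative F' x u) (at x within S)"
    and cont: "continuous_on (S \<times> sphere c r) (\<lambda>(x, u). F x u)"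
    and cont': "continuous_on (S \<times> sphere c r) (\<lambda>(x, u). F' x u)"
  shows "(\<lambda>x. contour_integral (circlepath c r) (F x)) holomorphic_on S"
  unfolding contour_integral_integral cbox_interval[symmetric]
proof (rule leibniz_rule_holomorphic[OF _ _ continuous_on_circlepath_integrand[OF cont' \<open>0 \<le> r\<close>] \<open>convex S\<close>])
  fix x t assume "x \<in> S" "t \<in> cbox (0::real) 1"
  moreover have "circlepath c r t \<in> sphere c r"
    using \<open>t \<in> cbox 0 1\<close> \<open>0 \<le> r\<close> path_image_circlepath_nonneg[of r c] by (auto simp: path_image_def)
  ultimately show "((\<lambda>x. F x (circlepath c r t) * vector_derivative (circlepath c r) (at t))
      has_field_derivative F' x (circlepath c r t) * vector_derivative (circlepath c r) (at t)) (at x within S)"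
    by (intro DERIV_cmult_right deriv)
next
  fix x assume "x \<in> S"
  have "continuous_on (cbox 0 1) (\<lambda>t. (\<lambda>(x, t). F x (circlepath c r t) * vector_derivative (circlepath c r) (at t)) (x, t))"
    by (rule continuous_on_compose2[OF continuous_on_circlepath_integrand[OF cont \<open>0 \<le> r\<close>]])
       (use \<open>x \<in> S\<close> in \<open>auto intro!: continuous_intros\<close>)
  then show "(\<lambda>t. F x (circlepath c r t) * vector_derivative (circlepath c r) (at t)) integrable_on cbox 0 1"
    by (auto intro: integrable_continuous_real)
qed

lemma continuous_on_deriv_param:
  fixes \<Phi> :: "complex \<Rightarrow> 'a::topological_space \<Rightarrow> complex"
  assumes cont: "continuous_on (cball w0 R \<times> S) (\<lambda>(w, z). \<Phi> w z)"
    and hol: "\<And>z. z \<in> S \<Longrightarrow> (\<lambda>w. \<Phi> w z) holomorphic_on ball w0 R"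
    and "0 \<le> r" "r < R"
  shows "continuous_on (ball w0 r \<times> S) (\<lambda>(w, z). deriv (\<lambda>w. \<Phi> w z) w)"
proof -
  let ?I = "\<lambda>x. contour_integral (circlepath w0 R) (\<lambda>u. \<Phi> u (snd x) / (u - fst x)^2)"
  have "continuous_on (ball w0 r \<times> S) ?I"
  proof (rule continuous_on_contour_integral_circlepath)
    have "continuous_on ((ball w0 r \<times> S) \<times> sphere w0 R)
            (\<lambda>y. (\<lambda>(w, z). \<Phi> w z) ((\<lambda>(x, u). (u, snd x)) y))"
      by (rule continuous_on_compose2[OF cont])
         (use \<open>r < R\<close> in \<open>auto simp: case_prod_beta intro!: continuous_intros\<close>)
    moreover have "u - fst x \<noteq> 0" if "(x, u) \<in> (ball w0 r \<times> S) \<times> sphere w0 R" for x u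
      using that \<open>r < R\<close> by (auto simp: dist_commute)
    ultimately show "continuous_on ((ball w0 r \<times> S) \<times> sphere w0 R)
                       (\<lambda>(x, u). \<Phi> u (snd x) / (u - fst x)^2)"
      unfolding case_prod_beta by (intro continuous_intros) auto
  qed (use \<open>0 \<le> r\<close> \<open>r < R\<close> in auto)
  then have "continuous_on (ball w0 r \<times> S) (\<lambda>x. ?I x / (2 * pi * \<i>))"
    by (intro continuous_intros) auto
  moreover have "?I x / (2 * pi * \<i>) = deriv (\<lambda>w. \<Phi> w (snd x)) (fst x)"
    if "x \<in> ball w0 r \<times> S" for x
  proof -
    have "continuous_on (cball w0 R) (\<lambda>w. \<Phi> w (snd x))"
      by (rule continuous_on_compose2[OF cont, of _ "\<lambda>w. (w, snd x)", simplified])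
         (use that in \<open>auto intro!: continuous_intros\<close>)
    with hol that \<open>r < R\<close> show ?thesis
      by (auto simp: Cauchy_contour_integral_circlepath_2)
  qed
  ultimately show ?thesis
    unfolding case_prod_beta by (rule continuous_on_eq)
qed

lemma open_prod_contains_cballs:
  fixes V :: "('a::metric_space \<times> 'b::metric_space) set"
  assumes "open V" "(x, y) \<in> V"
  obtains \<rho> where "\<rho> > 0" "cball x \<rho> \<times> cball y \<rho> \<subseteq> V"
proof -
  obtain A B where "open A" "open B" "(x, y) \<in> A \<times> B" and AB: "A \<times> B \<subseteq> V"
    by (rule open_prod_elim[OF assms])
  then have "x \<in> A" "y \<in> B" by simp_all
  obtain e1 where "e1 > 0" and A: "cball x e1 \<subseteq> A"
    using \<open>open A\<close> \<open>x \<in> A\<close> unfolding open_contains_cball by blast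
  obtain e2 where "e2 > 0" and B: "cball y e2 \<subseteq> B"
    using \<open>open B\<close> \<open>y \<in> B\<close> unfolding open_contains_cball by blast
  show ?thesis
  proof (rule that)
    show "min e1 e2 > 0"
      using \<open>e1 > 0\<close> \<open>e2 > 0\<close> by simp
    have "cball x (min e1 e2) \<times> cball y (min e1 e2) \<subseteq> A \<times> B"
      using subset_cball[of "min e1 e2" e1 x] subset_cball[of "min e1 e2" e2 y] A B by auto
    with AB show "cball x (min e1 e2) \<times> cball y (min e1 e2) \<subseteq> V"
      by (rule order_trans[rotated])
  qed
qed

(* By Cauchy's formula \<partial>\<^sub>z \<Phi>(w, z0) is a circle integral in z whose integrand is holomorphic
   in w with a jointly continuous w-derivative, so it can be differentiated under the integral. *)
lemma field_differentiable_deriv_param: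
  fixes \<Phi> :: "complex \<Rightarrow> complex \<Rightarrow> complex"
  assumes "open V" and cont: "continuous_on V (\<lambda>(w, z). \<Phi> w z)"
    and hol1: "\<And>w z. (w, z) \<in> V \<Longrightarrow> (\<lambda>w. \<Phi> w z) field_differentiable at w"
    and hol2: "\<And>w z. (w, z) \<in> V \<Longrightarrow> \<Phi> w field_differentiable at z"
    and "(w0, z0) \<in> V"
  shows "(\<lambda>w. deriv (\<Phi> w) z0) field_differentiable at w0"
proof -
  obtain \<rho> where "\<rho> > 0" and sub: "cball w0 \<rho> \<times> cball z0 \<rho> \<subseteq> V"
    using open_prod_contains_cballs[OF \<open>open V\<close> \<open>(w0, z0) \<in> V\<close>] by blast
  define r where "r = \<rho> / 2"
  have r: "0 < r" "r < \<rho>" using \<open>\<rho> > 0\<close> by (auto simp: r_def)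
  have inV: "(w, u) \<in> V" if "dist w0 w \<le> \<rho>" "dist z0 u \<le> \<rho>" for w u
    using sub that by auto
  let ?C = "\<lambda>w. contour_integral (circlepath z0 r) (\<lambda>u. \<Phi> w u / (u - z0)^2)"
  have Cauchy: "deriv (\<Phi> w) z0 = ?C w / (2 * pi * \<i>)" if "w \<in> ball w0 r" for w
  proof -
    have "continuous_on (cball z0 r) (\<Phi> w)"
      by (rule continuous_on_compose2[OF cont, of _ "\<lambda>u. (w, u)", simplified])
         (use that r in \<open>auto intro!: continuous_intros inV\<close>)
    moreover have "\<Phi> w holomorphic_on ball z0 r"
      by (rule holomorphic_onI, rule field_differentiable_at_within, rule hol2, rule inV)
         (use that r in auto)
    ultimately show ?thesis
      using r by (simp add: Cauchy_contour_integral_circlepath_2)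
  qed
  have C_hol: "?C holomorphic_on ball w0 r"
  proof (rule holomorphic_on_contour_integral_circlepath
           [where F' = "\<lambda>w u. deriv (\<lambda>w. \<Phi> w u) w / (u - z0)^2"])
    fix w u assume "w \<in> ball w0 r" "u \<in> sphere z0 r"
    then have "(w, u) \<in> V"
      using r by (intro inV) auto
    then have "((\<lambda>w. \<Phi> w u) has_field_derivative deriv (\<lambda>w. \<Phi> w u) w) (at w)"
      by (simp add: DERIV_deriv_iff_field_differentiable hol1)
    then show "((\<lambda>w. \<Phi> w u / (u - z0)^2) has_field_derivative deriv (\<lambda>w. \<Phi> w u) w / (u - z0)^2)
                 (at w within ball w0 r)"
      by (rule DERIV_cdivide[OF has_field_derivative_at_within])
  next
    have "continuous_on (ball w0 r \<times> sphere z0 r) (\<lambda>(w, u). \<Phi> w u)"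
      by (rule continuous_on_subset[OF cont]) (use r in \<open>auto intro!: inV\<close>)
    then show "continuous_on (ball w0 r \<times> sphere z0 r) (\<lambda>(w, u). \<Phi> w u / (u - z0)^2)"
      unfolding case_prod_beta using r by (intro continuous_intros) auto
  next
    have "continuous_on (ball w0 r \<times> sphere z0 r) (\<lambda>(w, u). deriv (\<lambda>w. \<Phi> w u) w)"
    proof (rule continuous_on_deriv_param[OF _ _ _ \<open>r < \<rho>\<close>])
      show "continuous_on (cball w0 \<rho> \<times> sphere z0 r) (\<lambda>(w, u). \<Phi> w u)"
        by (rule continuous_on_subset[OF cont]) (use r in \<open>auto intro!: inV\<close>)
      show "(\<lambda>w. \<Phi> w u) holomorphic_on ball w0 \<rho>" if "u \<in> sphere z0 r" for u
        by (rule holomorphic_onI, rule field_differentiable_at_within, rule hol1, rule inV)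
           (use that r in auto)
    qed (use r in auto)
    then show "continuous_on (ball w0 r \<times> sphere z0 r) (\<lambda>(w, u). deriv (\<lambda>w. \<Phi> w u) w / (u - z0)^2)"
      unfolding case_prod_beta using r by (intro continuous_intros) auto
  qed (use r in auto)
  have "(\<lambda>w. ?C w / (2 * pi * \<i>)) holomorphic_on ball w0 r"
    by (rule holomorphic_on_divide[OF C_hol holomorphic_on_const]) simp
  then have C_diff: "(\<lambda>w. ?C w / (2 * pi * \<i>)) field_differentiable at w0"
    by (rule holomorphic_on_imp_differentiable_at[OF _ open_ball]) (simp add: \<open>0 < r\<close>)
  show ?thesis
  proof (rule field_differentiable_transform_within[OF \<open>0 < r\<close> UNIV_I _ C_diff])
    fix w assume "dist w w0 < r"
    then show "?C w / (2 * pi * \<i>) = deriv (\<Phi> w) z0"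
      by (simp add: Cauchy dist_commute)
  qed
qed

section \<open>Complex derivatives of the coefficient\<close>

lemma bounded_linear_cscale_left: "bounded_linear (\<lambda>c. cscale c z)"
proof -
  have "linear (\<lambda>c. cscale c z)"
    by (rule linearI) (simp_all add: cscale_def vec_eq_iff algebra_simps mult_scaleR_left)
  then show ?thesis by (simp add: linear_conv_bounded_linear)
qed

lemma has_field_derivative_along_cscale:
  assumes "(f has_derivative L) (at (z + cscale c0 d))" and "\<forall>c w. L (cscale c w) = c * L w"
  shows "((\<lambda>c. f (z + cscale c d)) has_field_derivative L d) (at c0)"
proof -
  have "((\<lambda>c. z + cscale c d) has_derivative (\<lambda>c. cscale c d)) (at c0)"
    using has_derivative_add[OF has_derivative_const[of z]
                                bounded_linear_imp_has_derivative[OF bounded_linear_cscale_left]]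
    by simp
  from diff_chain_at[OF this assms(1)]
  have "((\<lambda>c. f (z + cscale c d)) has_derivative (\<lambda>c. L (cscale c d))) (at c0)"
    by (simp add: o_def)
  moreover have "(\<lambda>c. L (cscale c d)) = (*) (L d)"
    using assms(2) by (auto simp: fun_eq_iff mult.commute simp del: split_paired_All)
  ultimately show ?thesis by (simp add: has_field_derivative_def)
qed

lemma sum_cscale_axis: "(\<Sum>j\<in>UNIV. cscale (q $ j) (0, axis j 1)) = ((0::complex), q::complex^'n)"
proof -
  have "(\<Sum>j\<in>UNIV. cscale (q $ j) (0, axis j 1)) = ((0::complex), \<Sum>j\<in>UNIV. q $ j *s axis j 1)"
    by (simp add: cscale_def prod_eq_iff fst_sum snd_sum)
  also have "\<dots> = (0, q)" by (simp add: basis_expansion)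
  finally show ?thesis .
qed

lemma open_vimage_Pair_left:
  fixes U :: "(complex \<times> (complex^'n)) set"
  assumes "open U"
  shows "open ((\<lambda>s. (s, p)) -` U)"
  using assms by (intro continuous_open_vimage) (auto intro!: continuous_intros)

lemma cholo_on_isCont: "cholo_on U f \<Longrightarrow> z \<in> U \<Longrightarrow> isCont f z"
  unfolding cholo_on_def using has_derivative_continuous by blast

context
  fixes a :: "complex \<Rightarrow> complex^'n \<Rightarrow> complex" and U
  assumes hol: "cholo_on U (\<lambda>z. a (fst z) (snd z))"
begin

lemma cholo_on_has_field_derivative_ds:
  assumes "(w, q) \<in> U"
  shows "((\<lambda>s. a s q) has_field_derivative ds a w q) (at w)"
proof -
  obtain L where L: "((\<lambda>z. a (fst z) (snd z)) has_derivative L) (at (w, q))"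
    "\<forall>c z. L (cscale c z) = c * L z"
    using hol assms unfolding cholo_on_def by blast
  have "((\<lambda>s. a (fst ((0, q) + cscale s (1, 0))) (snd ((0, q) + cscale s (1, 0))))
          has_field_derivative L (1, 0)) (at w)"
    by (rule has_field_derivative_along_cscale) (use L in \<open>auto simp: cscale_def\<close>)
  then have "((\<lambda>s. a s q) has_field_derivative L (1, 0)) (at w)"
    by (simp add: cscale_def)
  then show ?thesis
    unfolding ds_def using DERIV_imp_deriv by metis
qed

lemma cholo_on_has_field_derivative_gradp:
  assumes "(w, q) \<in> U"
  shows "((\<lambda>c. a w (q + c *s d)) has_field_derivative bdot (gradp a w q) d) (at 0)"
proof -
  obtain L where L: "((\<lambda>z. a (fst z) (snd z)) has_derivative L) (at (w, q))"
    "\<forall>c z. L (cscale c z) = c * L z"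
    using hol assms unfolding cholo_on_def by blast
  have coord: "gradp a w q $ j = L (0, axis j 1)" for j
  proof -
    define z where "z = (w, \<chi> k. if k = j then 0 else q $ k)"
    have "z + cscale (q $ j) (0, axis j 1) = (w, q)"
      by (auto simp: z_def cscale_def vec_eq_iff axis_def)
    then have "((\<lambda>c. a (fst (z + cscale c (0, axis j 1))) (snd (z + cscale c (0, axis j 1))))
                 has_field_derivative L (0, axis j 1)) (at (q $ j))"
      using L by (intro has_field_derivative_along_cscale) auto
    moreover have "z + cscale c (0, axis j 1) = (w, \<chi> k. if k = j then c else q $ k)" for c
      by (simp add: z_def cscale_def vec_eq_iff axis_def)
    ultimately show ?thesis
      unfolding gradp_def using DERIV_imp_deriv by fastforce
  qed
  have "L (0, d) = L (\<Sum>j\<in>UNIV. cscale (d $ j) (0, axis j 1))"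
    by (simp add: sum_cscale_axis)
  also have "\<dots> = bdot (gradp a w q) d"
    using L has_derivative_linear[OF L(1)]
    by (simp add: linear_sum bdot_def coord mult.commute)
  finally have "L (0, d) = bdot (gradp a w q) d" .
  moreover have "((\<lambda>c. a (fst ((w, q) + cscale c (0, d))) (snd ((w, q) + cscale c (0, d))))
                   has_field_derivative L (0, d)) (at 0)"
    by (rule has_field_derivative_along_cscale) (use L in \<open>auto simp: cscale_def\<close>)
  ultimately show ?thesis
    by (simp add: cscale_def)
qed

lemma cholo_on_has_field_derivative_ray:
  assumes "(w, c *s p) \<in> U"
  shows "((\<lambda>c. a w (c *s p)) has_field_derivative bdot (gradp a w (c *s p)) p) (at c)"
proof -
  have "((\<lambda>t. a w (c *s p + t *s p)) has_field_derivative bdot (gradp a w (c *s p)) p) (at 0)"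
    by (rule cholo_on_has_field_derivative_gradp[OF assms])
  moreover have "c *s p + t *s p = (t + c) *s p" for t
    by (simp add: vec_eq_iff algebra_simps)
  ultimately show ?thesis
    using DERIV_shift[of "\<lambda>t. a w (t *s p)" _ 0 c] by simp
qed

lemma cholo_on_field_differentiable_ds:
  assumes "(w, p) \<in> U"
  shows "(\<lambda>s. ds a s p) field_differentiable at w"
proof -
  have W: "open ((\<lambda>s. (s, p)) -` U)"
    using hol by (simp add: cholo_on_def open_vimage_Pair_left)
  moreover have "(\<lambda>s. a s p) holomorphic_on (\<lambda>s. (s, p)) -` U"
    by (rule holomorphic_onI, rule field_differentiable_at_within)
       (auto simp: field_differentiable_def intro: cholo_on_has_field_derivative_ds)
  ultimately show ?thesis
    unfolding ds_def using assms
    by (intro holomorphic_on_imp_differentiable_at[OF _ W] holomorphic_deriv) auto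
qed

lemma cholo_on_field_differentiable_gradp:
  assumes "(w, p) \<in> U"
  shows "(\<lambda>s. bdot (gradp a s p) p) field_differentiable at w"
proof -
  have "open U" using hol by (simp add: cholo_on_def)
  define V where "V = (\<lambda>z::complex \<times> complex. (fst z, snd z *s p)) -` U"
  have "continuous_on UNIV (\<lambda>z::complex \<times> complex. (fst z, snd z *s p))"
    unfolding vector_scalar_mult_def by (intro continuous_intros)
  then have scale_cont: "isCont (\<lambda>z::complex \<times> complex. (fst z, snd z *s p)) z" for z
    using continuous_on_eq_continuous_at[OF open_UNIV] by blast
  have "(\<lambda>s. deriv (\<lambda>c. a s (c *s p)) 1) field_differentiable at w"
  proof (rule field_differentiable_deriv_param[where V = V])
    show "open V"
      unfolding V_def using continuous_open_vimage[OF \<open>open U\<close> scale_cont] .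
    have "isCont (\<lambda>z. a (fst z) (snd z *s p)) z" if "z \<in> V" for z
      using isCont_o2[OF scale_cont cholo_on_isCont[OF hol]] that by (simp add: V_def)
    then show "continuous_on V (\<lambda>(s, c). a s (c *s p))"
      by (simp add: case_prod_beta continuous_at_imp_continuous_on)
    show "(\<lambda>s. a s (c *s p)) field_differentiable at s" if "(s, c) \<in> V" for s c
      using cholo_on_has_field_derivative_ds[of s "c *s p"] that
      by (auto simp: V_def field_differentiable_def)
    show "(\<lambda>c. a s (c *s p)) field_differentiable at c" if "(s, c) \<in> V" for s c
      using cholo_on_has_field_derivative_ray[of s c p] that
      by (auto simp: V_def field_differentiable_def)
    show "(w, 1) \<in> V" using assms by (simp add: V_def)
  qed
  then obtain D where D: "((\<lambda>s. deriv (\<lambda>c. a s (c *s p)) 1) has_field_derivative D) (at w)"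
    by (auto simp: field_differentiable_def)
  have eq: "deriv (\<lambda>c. a s (c *s p)) 1 = bdot (gradp a s p) p" if "s \<in> (\<lambda>s. (s, p)) -` U" for s
  proof -
    have "((\<lambda>c. a s (c *s p)) has_field_derivative bdot (gradp a s (1 *s p)) p) (at 1)"
      by (rule cholo_on_has_field_derivative_ray) (use that in simp)
    then show ?thesis by (simp add: DERIV_imp_deriv)
  qed
  have "((\<lambda>s. bdot (gradp a s p) p) has_field_derivative D) (at w)"
    by (rule has_field_derivative_transform_within_open[OF D open_vimage_Pair_left[OF \<open>open U\<close>]])
       (use assms eq in auto)
  then show ?thesis by (auto simp: field_differentiable_def)
qed

end

section \<open>Linear solutions\<close>

lemma norm_vector_scalar_mult: "norm (c *s (p::complex^'n)) = cmod c * norm p"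
  unfolding norm_vec_def by (simp add: norm_mult L2_set_right_distrib)

lemma bdot_scale_left: "bdot (c *s q) p = c * bdot q p"
  by (simp add: bdot_def sum_distrib_left algebra_simps)

lemma bdot_scale_right: "bdot q (c *s p) = c * bdot q p"
  by (simp add: bdot_def sum_distrib_left algebra_simps)

lemma bdot_add_left: "bdot (x + y) q = bdot x q + bdot y q"
  by (simp add: bdot_def sum.distrib algebra_simps)

lemma bdot_vreal_0 [simp]: "bdot (vreal 0) p = 0"
  by (simp add: bdot_def vreal_def)

lemma bdot_vreal_axis_line:
  "bdot (vreal (x + t *\<^sub>R axis j 1)) p = bdot (vreal x) p + of_real t * p $ j"
proof -
  have "bdot (vreal (x + t *\<^sub>R axis j 1)) p =
          (\<Sum>k\<in>UNIV. of_real (x $ k) * p $ k + (if k = j then of_real t * p $ j else 0))"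
    unfolding bdot_def by (intro sum.cong) (auto simp: vreal_def axis_def algebra_simps)
  then show ?thesis
    by (simp add: sum.distrib bdot_def vreal_def)
qed

lemma norm_bdot_vreal_le: "cmod (bdot (vreal y) p) \<le> norm y * norm p"
proof -
  have "cmod (bdot (vreal y) p) \<le> (\<Sum>k\<in>UNIV. \<bar>y $ k\<bar> * \<bar>cmod (p $ k)\<bar>)"
    unfolding bdot_def vreal_def by (rule order_trans[OF norm_sum]) (simp add: norm_mult)
  also have "\<dots> \<le> L2_set (\<lambda>k. \<bar>y $ k\<bar>) UNIV * L2_set (\<lambda>k. cmod (p $ k)) UNIV"
    using L2_set_mult_ineq[of "\<lambda>k. \<bar>y $ k\<bar>" "\<lambda>k. cmod (p $ k)"] by simp
  finally show ?thesis
    by (simp add: norm_vec_def)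
qed

lemma pd_along_complex_line:
  fixes f :: "real^'n \<Rightarrow> complex"
  assumes line: "\<And>t. f (x + t *\<^sub>R axis j 1) = K (c + of_real t * \<beta>)"
    and K: "(K has_field_derivative K') (at c)"
  shows "has_pd f j x" and "pd f j x = \<beta> * K'"
proof -
  have "((\<lambda>t::real. c + t *\<^sub>R \<beta>) has_vector_derivative \<beta>) (at 0)"
    by (auto intro!: derivative_eq_intros)
  then have "((\<lambda>t::real. c + of_real t * \<beta>) has_vector_derivative \<beta>) (at 0)"
    by (simp add: scaleR_conv_of_real)
  from field_vector_diff_chain_at[OF this] K
  have "((\<lambda>t. f (x + t *\<^sub>R axis j 1)) has_vector_derivative \<beta> * K') (at 0)"
    by (simp add: o_def line)
  then show "has_pd f j x" and "pd f j x = \<beta> * K'"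
    unfolding has_pd_def pd_def using differentiableI_vector vector_derivative_at by blast+
qed

lemma
  shows has_pd_bdot_vreal: "has_pd (\<lambda>y. bdot (vreal y) p) j x"
    and pd_bdot_vreal: "pd (\<lambda>y. bdot (vreal y) p) j = (\<lambda>_. p $ j)"
proof -
  have "bdot (vreal (x + t *\<^sub>R axis j 1)) p = (\<lambda>z. z) (bdot (vreal x) p + of_real t * p $ j)"
    for x t by (simp add: bdot_vreal_axis_line)
  from pd_along_complex_line[OF this DERIV_ident]
  show "has_pd (\<lambda>y. bdot (vreal y) p) j x" "pd (\<lambda>y. bdot (vreal y) p) j = (\<lambda>_. p $ j)"
    by auto
qed

lemma
  shows has_pd_const: "has_pd (\<lambda>y::real^'n. c::complex) j x"
    and pd_const: "pd (\<lambda>y::real^'n. c::complex) j x = 0"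
  using pd_along_complex_line[of "\<lambda>y. c" x j "\<lambda>z. z" c 0, OF _ DERIV_ident] by auto

lemma C2a_bdot_vreal: "C2a S \<alpha> (\<lambda>y::real^'n. bdot (vreal y) p)"
  unfolding C2a_def pd_bdot_vreal
proof (intro conjI allI ballI has_pd_bdot_vreal has_pd_const uniformly_continuous_on_const)
  show "continuous_on (closure S) (\<lambda>y. bdot (vreal y) p)"
    unfolding bdot_def vreal_def by (simp, intro continuous_intros)
  show "holder_on \<alpha> S (pd (\<lambda>y. p $ j) i)" for i j
    unfolding holder_on_def pd_const by (intro exI[of _ 0]) simp
qed

(* The Euler term a + p \<cdot> \<nabla>\<^sub>p a, i.e. d/d\<lambda> (\<lambda> a(s, \<lambda> p)) at \<lambda> = 1. *)
definition euler_op :: "(complex \<Rightarrow> complex^'n \<Rightarrow> complex) \<Rightarrow> complex \<Rightarrow> complex^'n \<Rightarrow> complex" where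
  "euler_op a s p = a s p + bdot (gradp a s p) p"

lemma solves_bdot_vreal:
  fixes a :: "complex \<Rightarrow> complex^'n \<Rightarrow> complex"
  assumes hol: "cholo_on U (\<lambda>z. a (fst z) (snd z))" and null: "bdot p p = 0"
    and inU: "\<And>y. y \<in> S \<Longrightarrow> (u_sp s p y, p) \<in> U"
  shows "solves S \<alpha> a s p (\<lambda>y. bdot (vreal y) p) (\<lambda>y. bdot (vreal y) p)"
  unfolding solves_def
proof (intro conjI ballI C2a_bdot_vreal refl)
  fix x assume "x \<in> S"
  let ?F = "\<lambda>y. flux a s p y (bdot (vreal y) p) (gradc (\<lambda>y. bdot (vreal y) p) y)"
  \<comment> \<open>Since \<open>v = u - s\<close> and \<open>\<nabla>v = p\<close>, the flux is \<open>K(u) p\<close>; its divergence is \<open>K'(u) (p \<cdot> p) = 0\<close>.\<close>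
  define K where "K = (\<lambda>w. euler_op a w p + ds a w p * (w - s))"
  have flux: "?F y $ j = K (u_sp s p y) * p $ j" for y j
    by (simp add: gradc_def pd_bdot_vreal flux_def K_def euler_op_def u_sp_def algebra_simps)
  have "K field_differentiable at (u_sp s p x)"
    unfolding K_def euler_op_def using inU[OF \<open>x \<in> S\<close>]
    by (intro field_differentiable_add field_differentiable_mult field_differentiable_diff
              field_differentiable_ident field_differentiable_const
              cholo_on_field_differentiable_ds[OF hol] cholo_on_field_differentiable_gradp[OF hol])
       (auto simp: field_differentiable_def intro: cholo_on_has_field_derivative_ds[OF hol])
  then obtain K' where "(K has_field_derivative K') (at (u_sp s p x))"
    by (auto simp: field_differentiable_def)
  then have K': "((\<lambda>z. K z * p $ j) has_field_derivative K' * p $ j) (at (u_sp s p x))" for j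
    by (rule DERIV_cmult_right)
  have line: "?F (x + t *\<^sub>R axis j 1) $ j = K (u_sp s p x + of_real t * p $ j) * p $ j" for j t
    by (simp only: flux) (simp add: u_sp_def bdot_vreal_axis_line algebra_simps)
  show "div_zero ?F x"
    unfolding div_zero_def
  proof (intro conjI allI)
    show "has_pd (\<lambda>y. ?F y $ j) j x" for j
      by (rule pd_along_complex_line(1)[OF line K'])
    have "(\<Sum>j\<in>UNIV. pd (\<lambda>y. ?F y $ j) j x) = (\<Sum>j\<in>UNIV. K' * (p $ j * p $ j))"
      using pd_along_complex_line(2)[OF line K'] by (simp add: algebra_simps)
    also have "\<dots> = K' * bdot p p"
      by (simp add: bdot_def sum_distrib_left)
    finally show "(\<Sum>j\<in>UNIV. pd (\<lambda>y. ?F y $ j) j x) = 0"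
      by (simp add: null)
  qed
qed

lemma lin_DN_bdot_vreal_at_0:
  assumes "(0::real^'n) islimpt S"
  shows "lin_DN S \<alpha> a s p (\<lambda>y. bdot (vreal y) p) 0 =
           euler_op a s p * bdot p (vreal (outer_normal S \<alpha> 0))"
proof -
  have "\<not> trivial_limit (at 0 within S)"
    using assms by (simp add: trivial_limit_within)
  then have "gradb S (\<lambda>y. bdot (vreal y) p) 0 = p"
    unfolding gradb_def pd_bdot_vreal by (simp add: vec_eq_iff tendsto_Lim[OF _ tendsto_const])
  \<comment> \<open>The \<open>\<partial>\<^sub>s a\<close> term of the flux drops out because \<open>v(0) = 0\<close>.\<close>
  then show ?thesis
    unfolding lin_DN_def
    by (simp add: flux_def u_sp_def euler_op_def bdot_scale_left bdot_add_left algebra_simps)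
qed

section \<open>Unique continuation\<close>

(* \<phi> + l \<phi>' is the derivative of l \<phi>(l), which is therefore constant, hence 0, near 0. *)
lemma holomorphic_eq_0_if_Euler_eq_0:
  fixes \<phi> :: "complex \<Rightarrow> complex"
  assumes hol: "\<phi> holomorphic_on D" and "open D" "connected D" "0 \<in> D" "0 < e"
    and Euler: "\<And>l. l \<in> ball 0 e - {0} \<Longrightarrow> \<phi> l + l * deriv \<phi> l = 0"
    and "z \<in> D"
  shows "\<phi> z = 0"
proof -
  obtain d where "0 < d" "d \<le> e" and "ball 0 d \<subseteq> D"
  proof -
    obtain d where "0 < d" "ball 0 d \<subseteq> D"
      using \<open>open D\<close> \<open>0 \<in> D\<close> open_contains_ball by blast
    then show ?thesis
      using \<open>0 < e\<close> by (intro that[of "min d e"]) auto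
  qed
  have deriv_mult: "((\<lambda>l. l * \<phi> l) has_field_derivative \<phi> l + l * deriv \<phi> l) (at l)" if "l \<in> D" for l
  proof -
    have "(\<phi> has_field_derivative deriv \<phi> l) (at l)"
      using hol \<open>open D\<close> that by (auto intro: holomorphic_derivI)
    from DERIV_mult[OF DERIV_ident this] show ?thesis by (simp add: mult.commute)
  qed
  obtain c where c: "\<And>l. l \<in> ball 0 d \<Longrightarrow> l * \<phi> l = c"
  proof (rule DERIV_zero_connected_constant[of "ball 0 d" "{0}" "\<lambda>l. l * \<phi> l"])
    show "continuous_on (ball 0 d) (\<lambda>l. l * \<phi> l)"
      using holomorphic_on_imp_continuous_on[OF holomorphic_on_subset[OF hol \<open>ball 0 d \<subseteq> D\<close>]]
      by (intro continuous_intros)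
    show "\<forall>l\<in>ball 0 d - {0}. ((\<lambda>l. l * \<phi> l) has_field_derivative 0) (at l)"
    proof
      fix l :: complex assume "l \<in> ball 0 d - {0}"
      then have "l \<in> D" "l \<in> ball 0 e - {0}"
        using \<open>d \<le> e\<close> \<open>ball 0 d \<subseteq> D\<close> by auto
      then show "((\<lambda>l. l * \<phi> l) has_field_derivative 0) (at l)"
        using deriv_mult[of l] Euler[of l] by simp
    qed
  qed auto
  then have "c = 0"
    using c[of 0] \<open>0 < d\<close> by simp
  then have zero: "\<phi> l = 0" if "l \<in> ball 0 d - {0}" for l
    using c[of l] that by simp
  show ?thesis
  proof (rule analytic_continuation_open[of "ball 0 d - {0}" D \<phi> "\<lambda>_. 0"])
    have "of_real (d / 2) \<in> ball (0::complex) d - {0}"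
      using \<open>0 < d\<close> by simp
    then show "ball (0::complex) d - {0} \<noteq> {}"
      by blast
    show "open (ball 0 d - {0})" "ball 0 d - {0} \<subseteq> D"
      using \<open>ball 0 d \<subseteq> D\<close> by (auto simp: open_delete)
  qed (use \<open>open D\<close> \<open>connected D\<close> hol zero \<open>z \<in> D\<close> in simp_all)
qed

lemma eq_on_null_vector_if_euler_op_eq:
  fixes a1 a2 :: "complex \<Rightarrow> complex^'n \<Rightarrow> complex" and s :: complex
  assumes hol1: "cholo_on U (\<lambda>z. a1 (fst z) (snd z))" and hol2: "cholo_on U (\<lambda>z. a2 (fst z) (snd z))"
    and inU: "\<And>q. norm q < r0 \<Longrightarrow> (s, q) \<in> U" and "0 < \<delta>"
    and euler: "\<And>q. bdot q q = 0 \<Longrightarrow> norm q < \<delta> \<Longrightarrow> bdot q \<nu> \<noteq> 0 \<Longrightarrow>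
                  euler_op a1 s q = euler_op a2 s q"
    and p: "bdot p p = 0" "norm p < r0" "bdot p \<nu> \<noteq> 0"
  shows "a1 s p = a2 s p"
proof -
  have "norm p > 0"
    using p(3) by (auto simp: bdot_def)
  moreover have "0 < r0"
    using \<open>norm p > 0\<close> p(2) by linarith
  ultimately have "0 < r0 / norm p"
    by (intro divide_pos_pos)
  define D where "D = ball (0::complex) (r0 / norm p)"
  define \<phi> where "\<phi> = (\<lambda>l. a1 s (l *s p) - a2 s (l *s p))"
  have inD: "(s, l *s p) \<in> U" if "l \<in> D" for l
    using that \<open>norm p > 0\<close> by (intro inU) (simp add: D_def norm_vector_scalar_mult field_simps)
  have \<phi>_deriv: "(\<phi> has_field_derivative bdot (gradp a1 s (l *s p)) p - bdot (gradp a2 s (l *s p)) p) (at l)"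
    if "l \<in> D" for l
    unfolding \<phi>_def using inD[OF that]
    by (intro DERIV_diff cholo_on_has_field_derivative_ray[OF hol1] cholo_on_has_field_derivative_ray[OF hol2])
       auto
  have "\<phi> 1 = 0"
  proof (rule holomorphic_eq_0_if_Euler_eq_0[where \<phi> = \<phi> and D = D and e = "min \<delta> r0 / norm p"])
    show "\<phi> holomorphic_on D"
      by (rule holomorphic_onI, rule field_differentiable_at_within)
         (use \<phi>_deriv in \<open>auto simp: field_differentiable_def\<close>)
    show "open D" "connected D" "0 \<in> D" "1 \<in> D"
      using \<open>0 < r0 / norm p\<close> \<open>norm p > 0\<close> p(2) by (auto simp: D_def)
    show "0 < min \<delta> r0 / norm p"
      using \<open>0 < \<delta>\<close> \<open>0 < r0\<close> \<open>norm p > 0\<close> by (intro divide_pos_pos) auto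
    fix l :: complex assume l: "l \<in> ball 0 (min \<delta> r0 / norm p) - {0}"
    moreover have "min \<delta> r0 / norm p \<le> r0 / norm p"
      by (intro divide_right_mono) auto
    ultimately have "l \<in> D"
      by (auto simp: D_def)
    have "bdot (l *s p) (l *s p) = 0" "norm (l *s p) < \<delta>" "bdot (l *s p) \<nu> \<noteq> 0"
      using l p \<open>norm p > 0\<close> by (auto simp: bdot_scale_left bdot_scale_right norm_vector_scalar_mult field_simps)
    then have "euler_op a1 s (l *s p) = euler_op a2 s (l *s p)"
      by (rule euler)
    then show "\<phi> l + l * deriv \<phi> l = 0"
      unfolding DERIV_imp_deriv[OF \<phi>_deriv[OF \<open>l \<in> D\<close>]]
      by (simp add: \<phi>_def euler_op_def bdot_scale_right algebra_simps)
  qed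
  then show ?thesis
    by (simp add: \<phi>_def)
qed

lemma islimpt_if_frontier_of_open: "open S \<Longrightarrow> x \<in> frontier S \<Longrightarrow> x islimpt S"
  by (auto simp: frontier_def interior_open closure_def)

lemma u_sp_mem_strip:
  assumes "norm y \<le> B" "norm q \<le> R0 / B" "0 < B"
  shows "u_sp (complex_of_real s) q y \<in> strip R0"
proof -
  have "norm y * norm q \<le> B * (R0 / B)"
    using assms by (intro mult_mono) auto
  also have "\<dots> = R0"
    using \<open>0 < B\<close> by simp
  finally have "\<bar>Im (bdot (vreal y) q)\<bar> \<le> R0"
    using abs_Im_le_cmod[of "bdot (vreal y) q"] norm_bdot_vreal_le[of y q] by linarith
  then show ?thesis
    by (simp add: u_sp_def strip_def)
qed

lemma euler_op_eq_if_lin_DN_eq: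
  fixes a1 a2 :: "complex \<Rightarrow> complex^'n \<Rightarrow> complex"
  assumes "open \<Omega>" "0 \<in> frontier \<Omega>"
    and hol1: "cholo_on U (\<lambda>z. a1 (fst z) (snd z))" and hol2: "cholo_on U (\<lambda>z. a2 (fst z) (snd z))"
    and inU: "\<And>y. y \<in> \<Omega> \<Longrightarrow> (u_sp s q y, q) \<in> U"
    and null: "bdot q q = 0" and "bdot q (vreal (outer_normal \<Omega> \<alpha> 0)) \<noteq> 0"
    and DN: "\<And>v1 v2. solves \<Omega> \<alpha> a1 s q (\<lambda>y. bdot (vreal y) q) v1 \<Longrightarrow>
               solves \<Omega> \<alpha> a2 s q (\<lambda>y. bdot (vreal y) q) v2 \<Longrightarrow>
               \<forall>x\<in>frontier \<Omega>. lin_DN \<Omega> \<alpha> a1 s q v1 x = lin_DN \<Omega> \<alpha> a2 s q v2 x"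
  shows "euler_op a1 s q = euler_op a2 s q"
proof -
  have "\<forall>x\<in>frontier \<Omega>. lin_DN \<Omega> \<alpha> a1 s q (\<lambda>y. bdot (vreal y) q) x
                        = lin_DN \<Omega> \<alpha> a2 s q (\<lambda>y. bdot (vreal y) q) x"
    using inU by (intro DN solves_bdot_vreal[OF hol1 null] solves_bdot_vreal[OF hol2 null])
  then have "lin_DN \<Omega> \<alpha> a1 s q (\<lambda>y. bdot (vreal y) q) 0 = lin_DN \<Omega> \<alpha> a2 s q (\<lambda>y. bdot (vreal y) q) 0"
    using \<open>0 \<in> frontier \<Omega>\<close> by blast
  with assms(7) show ?thesis
    by (simp add: lin_DN_bdot_vreal_at_0[OF islimpt_if_frontier_of_open[OF assms(1,2)]])
qed

lemma holomorphic_eq_0_on_strip_if_eq_0_on_Reals: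
  assumes hol: "f holomorphic_on W" and "open W" "strip R0 \<subseteq> W" "0 \<le> R0"
    and real: "\<And>x::real. f (of_real x) = 0" and "w \<in> strip R0"
  shows "f w = 0"
proof -
  define C where "C = connected_component_set W 0"
  have "strip R0 = {z. Im z \<le> R0} \<inter> {z. Im z \<ge> -R0}"
    by (auto simp: strip_def)
  then have "connected (strip R0)"
    by (simp add: convex_connected convex_Int convex_halfspace_Im_le convex_halfspace_Im_ge)
  have "0 \<in> strip R0"
    using \<open>0 \<le> R0\<close> by (simp add: strip_def)
  have strip_C: "strip R0 \<subseteq> C"
    unfolding C_def
    by (rule connected_component_maximal[OF \<open>0 \<in> strip R0\<close> \<open>connected (strip R0)\<close> \<open>strip R0 \<subseteq> W\<close>])
  have reals_strip: "complex_of_real x \<in> strip R0" for x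
    using \<open>0 \<le> R0\<close> by (simp add: strip_def)
  show ?thesis
  proof (rule analytic_continuation[of f C "range complex_of_real" 0])
    show "f holomorphic_on C"
      by (rule holomorphic_on_subset[OF hol]) (simp add: C_def connected_component_subset)
    show "open C" "connected C"
      by (simp_all add: C_def open_connected_component[OF \<open>open W\<close>])
    show "range complex_of_real \<subseteq> C" "0 \<in> C" "w \<in> C"
      using strip_C reals_strip \<open>0 \<in> strip R0\<close> \<open>w \<in> strip R0\<close> by auto
    show "0 islimpt range complex_of_real"
      unfolding islimpt_approachable
    proof (intro allI impI)
      fix e :: real assume "e > 0"
      then show "\<exists>x'\<in>range complex_of_real. x' \<noteq> 0 \<and> dist x' 0 < e"
        by (intro bexI[of _ "complex_of_real (e / 2)"] rangeI) auto
    qed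
  qed (use real in auto)
qed

lemma cholo_on_eq_on_strip_if_eq_on_Reals:
  fixes a1 a2 :: "complex \<Rightarrow> complex^'n \<Rightarrow> complex"
  assumes hol1: "cholo_on U (\<lambda>z. a1 (fst z) (snd z))" and hol2: "cholo_on U (\<lambda>z. a2 (fst z) (snd z))"
    and strip: "\<And>z. z \<in> strip R0 \<Longrightarrow> (z, p) \<in> U" and "0 \<le> R0"
    and real: "\<And>x::real. a1 (of_real x) p = a2 (of_real x) p" and "w \<in> strip R0"
  shows "a1 w p = a2 w p"
proof -
  let ?W = "(\<lambda>w. (w, p)) -` U"
  have "((\<lambda>w. a1 w p - a2 w p) has_field_derivative ds a1 x p - ds a2 x p) (at x)" if "x \<in> ?W" for x
    using that by (intro DERIV_diff cholo_on_has_field_derivative_ds[OF hol1]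
                         cholo_on_has_field_derivative_ds[OF hol2]) simp_all
  then have "(\<lambda>w. a1 w p - a2 w p) holomorphic_on ?W"
    unfolding holomorphic_on_def field_differentiable_def
    using has_field_derivative_at_within by blast
  moreover have "open ?W"
    using hol1 by (intro open_vimage_Pair_left) (simp add: cholo_on_def)
  moreover have "strip R0 \<subseteq> ?W"
    using strip by blast
  ultimately have "a1 w p - a2 w p = 0"
    using holomorphic_eq_0_on_strip_if_eq_0_on_Reals[of "\<lambda>w. a1 w p - a2 w p" ?W R0 w]
          \<open>0 \<le> R0\<close> real \<open>w \<in> strip R0\<close> by simp
  then show ?thesis
    by simp
qed

lemma H123_common_domain:
  assumes "H123 r0 R0 a1" "H123 r0 R0 a2"
  obtains U where "strip R0 \<times> ball 0 r0 \<subseteq> U"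
    "cholo_on U (\<lambda>z. a1 (fst z) (snd z))" "cholo_on U (\<lambda>z. a2 (fst z) (snd z))"
proof -
  obtain U1 U2 where U1: "strip R0 \<times> ball 0 r0 \<subseteq> U1" "cholo_on U1 (\<lambda>z. a1 (fst z) (snd z))"
    and U2: "strip R0 \<times> ball 0 r0 \<subseteq> U2" "cholo_on U2 (\<lambda>z. a2 (fst z) (snd z))"
    using assms unfolding H123_def by blast
  have "cholo_on (U1 \<inter> U2) (\<lambda>z. a1 (fst z) (snd z))" "cholo_on (U1 \<inter> U2) (\<lambda>z. a2 (fst z) (snd z))"
    using U1(2) U2(2) by (auto simp: cholo_on_def)
  with Int_greatest[OF U1(1) U2(1)] show ?thesis
    by (rule that)
qed

lemma euler_op_eq_near_0_if_lin_DN_eq: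
  fixes a1 a2 :: "complex \<Rightarrow> complex^'n \<Rightarrow> complex"
  assumes "bounded \<Omega>" "open \<Omega>" "0 \<in> frontier \<Omega>" "0 < r0" "0 < R0"
    and hol1: "cholo_on U (\<lambda>z. a1 (fst z) (snd z))" and hol2: "cholo_on U (\<lambda>z. a2 (fst z) (snd z))"
    and inU: "\<And>z q. z \<in> strip R0 \<Longrightarrow> norm q < r0 \<Longrightarrow> (z, q) \<in> U"
    and DN: "\<And>s p h v1 v2. bdot p p = 0 \<Longrightarrow> norm p < r0 \<Longrightarrow> C2a \<Omega> \<alpha> h \<Longrightarrow>
                 solves \<Omega> \<alpha> a1 (complex_of_real s) p h v1 \<Longrightarrow>
                 solves \<Omega> \<alpha> a2 (complex_of_real s) p h v2 \<Longrightarrow>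
                 \<forall>x\<in>frontier \<Omega>. lin_DN \<Omega> \<alpha> a1 (complex_of_real s) p v1 x
                                = lin_DN \<Omega> \<alpha> a2 (complex_of_real s) p v2 x"
  shows "\<exists>\<delta>>0. \<forall>(s::real) q. bdot q q = 0 \<longrightarrow> norm q < \<delta> \<longrightarrow>
           bdot q (vreal (outer_normal \<Omega> \<alpha> 0)) \<noteq> 0 \<longrightarrow> euler_op a1 (of_real s) q = euler_op a2 (of_real s) q"
proof -
  obtain B where "B > 0" and B: "\<And>y. y \<in> \<Omega> \<Longrightarrow> norm y \<le> B"
    using \<open>bounded \<Omega>\<close> unfolding bounded_pos by blast
  define \<delta> where "\<delta> = min r0 (R0 / B)"
  show ?thesis
  proof (intro exI[of _ \<delta>] conjI allI impI)
    show "0 < \<delta>"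
      using \<open>0 < r0\<close> \<open>0 < R0\<close> \<open>B > 0\<close> by (simp add: \<delta>_def)
    fix s :: real and q
    assume q: "bdot q q = 0" "norm q < \<delta>" "bdot q (vreal (outer_normal \<Omega> \<alpha> 0)) \<noteq> 0"
    show "euler_op a1 (of_real s) q = euler_op a2 (of_real s) q"
    proof (rule euler_op_eq_if_lin_DN_eq[OF \<open>open \<Omega>\<close> \<open>0 \<in> frontier \<Omega>\<close> hol1 hol2 _ q(1,3)])
      have "norm q \<le> R0 / B" "norm q < r0"
        using q(2) by (simp_all add: \<delta>_def)
      then show "(u_sp (of_real s) q y, q) \<in> U" if "y \<in> \<Omega>" for y
        by (rule inU[OF u_sp_mem_strip[OF B[OF that] _ \<open>B > 0\<close>]])
      show "\<forall>x\<in>frontier \<Omega>. lin_DN \<Omega> \<alpha> a1 (of_real s) q v1 x = lin_DN \<Omega> \<alpha> a2 (of_real s) q v2 x"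
        if "solves \<Omega> \<alpha> a1 (of_real s) q (\<lambda>y. bdot (vreal y) q) v1"
          and "solves \<Omega> \<alpha> a2 (of_real s) q (\<lambda>y. bdot (vreal y) q) v2" for v1 v2
        by (rule DN[OF q(1) \<open>norm q < r0\<close> C2a_bdot_vreal that])
    qed
  qed
qed

theorem theorem6p4:
  fixes \<Omega> :: "(real^'n) set"
    and \<alpha> r0 R0 :: real
    and a1 a2 :: "complex \<Rightarrow> complex^'n \<Rightarrow> complex"
  assumes n2: "CARD('n) \<ge> 2"
    and alpha: "0 < \<alpha>" "\<alpha> < 1"
    and dom: "C2a_domain \<Omega> \<alpha>"
    and zero_bd: "0 \<in> frontier \<Omega>"
    and r0: "0 < r0" and R0: "0 < R0"
    and H1: "H123 r0 R0 a1" and H2: "H123 r0 R0 a2"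
    and solv: "\<And>a s p h. a \<in> {a1, a2} \<Longrightarrow> bdot p p = 0 \<Longrightarrow> norm p < r0 \<Longrightarrow>
                 C2a \<Omega> \<alpha> h \<Longrightarrow>
                 \<exists>v. solves \<Omega> \<alpha> a (complex_of_real s) p h v \<and>
                     (\<forall>w. solves \<Omega> \<alpha> a (complex_of_real s) p h w \<longrightarrow> (\<forall>x\<in>closure \<Omega>. w x = v x))"
    and DN: "\<And>s p h v1 v2. bdot p p = 0 \<Longrightarrow> norm p < r0 \<Longrightarrow> C2a \<Omega> \<alpha> h \<Longrightarrow>
                 solves \<Omega> \<alpha> a1 (complex_of_real s) p h v1 \<Longrightarrow>
                 solves \<Omega> \<alpha> a2 (complex_of_real s) p h v2 \<Longrightarrow>
                 \<forall>x\<in>frontier \<Omega>. lin_DN \<Omega> \<alpha> a1 (complex_of_real s) p v1 x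
                                = lin_DN \<Omega> \<alpha> a2 (complex_of_real s) p v2 x"
  shows "\<forall>s\<in>strip R0. \<forall>p\<in>cone \<Omega> \<alpha> r0. a1 s p = a2 s p"
proof -
  obtain U where U: "strip R0 \<times> ball 0 r0 \<subseteq> U"
    and hol1: "cholo_on U (\<lambda>z. a1 (fst z) (snd z))" and hol2: "cholo_on U (\<lambda>z. a2 (fst z) (snd z))"
    using H123_common_domain[OF H1 H2] by blast
  have inU: "(z, q) \<in> U" if "z \<in> strip R0" "norm q < r0" for z q
    using that subsetD[OF U, of "(z, q)"] by simp
  have "bounded \<Omega>" "open \<Omega>"
    using dom by (simp_all add: C2a_domain_def)
  then have "\<exists>\<delta>>0. \<forall>(s::real) q. bdot q q = 0 \<longrightarrow> norm q < \<delta> \<longrightarrow>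
               bdot q (vreal (outer_normal \<Omega> \<alpha> 0)) \<noteq> 0 \<longrightarrow> euler_op a1 (of_real s) q = euler_op a2 (of_real s) q"
    by (rule euler_op_eq_near_0_if_lin_DN_eq[OF _ _ zero_bd r0 R0 hol1 hol2]) (fact inU, fact DN)
  then obtain \<delta> where "0 < \<delta>" and euler:
    "\<And>s q. bdot q q = 0 \<Longrightarrow> norm q < \<delta> \<Longrightarrow> bdot q (vreal (outer_normal \<Omega> \<alpha> 0)) \<noteq> 0 \<Longrightarrow>
       euler_op a1 (of_real s) q = euler_op a2 (of_real s) q"
    by blast
  have real: "a1 (of_real s) p = a2 (of_real s) p" if "p \<in> cone \<Omega> \<alpha> r0" for s :: real and p
  proof (rule eq_on_null_vector_if_euler_op_eq[OF hol1 hol2 _ \<open>0 < \<delta>\<close> euler])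
    show "(of_real s, q) \<in> U" if "norm q < r0" for q
      using R0 by (intro inU[OF _ that]) (simp add: strip_def)
  qed (use that in \<open>auto simp: cone_def\<close>)
  show ?thesis
  proof (intro ballI)
    fix w p assume "w \<in> strip R0" and p: "p \<in> cone \<Omega> \<alpha> r0"
    have "(z, p) \<in> U" if "z \<in> strip R0" for z
      using p by (intro inU[OF that]) (simp add: cone_def)
    then show "a1 w p = a2 w p"
      by (rule cholo_on_eq_on_strip_if_eq_on_Reals[OF hol1 hol2])
         (use R0 real[OF p] \<open>w \<in> strip R0\<close> in simp_all)
  qed
qed

end
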